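(* Fix a policy $\pi$, a non-negative cost $c$, a model $W$, and a start state $x_0$; assume $J^\pi_h(x;c,W)<\infty$ for all $x,h$ and $\mathbb E[(\sum_{h<H}c(x_h,u_h))^2\mid\pi,x_0,W^\star]<\infty$. Consider trajectories $\{x_h,u_h\}$ generated by $\pi$ in the model $W^\star$ from $x_0$. Define the stopping time $\tau=\min\{h\ge0: J^\pi_h(x_h;c,W)\ge J^\pi_h(x_h;c,W^\star)\}$ (so $\tau\le H$, using $J^\pi_H\equiv0$) and $\widetilde J_h(x)=\min\{J^\pi_h(x;c,W),J^\pi_h(x;c,W^\star)\}$. Then $$J^\pi_0(x_0;c,W^\star)-J^\pi_0(x_0;c,W)\le\mathbb E\Big[\sum_{h=0}^{H-1}\mathbf 1\{h<\tau\}\Big(\mathbb E_{x'\sim P(\cdot\mid W^\star,x_h,u_h)}\widetilde J_{h+1}(x')-\mathbb E_{x'\sim P(\cdot\mid W,x_h,u_h)}\widetilde J_{h+1}(x')\Big)\Big],$$ where the outer expectation is over the trajectory of $\pi$ in $W^\star$.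
   Context: $\mathcal X=\mathbb R^{d_{\mathcal X}}$, $\mathcal U$ an arbitrary set, $\phi:\mathcal X\times\mathcal U\to\mathcal H$ a feature map into a Hilbert space; for a bounded linear $W:\mathcal H\to\mathbb R^{d_{\mathcal X}}$ the model $W$ has dynamics $x_{h+1}=W\phi(x_h,u_h)+\epsilon_h$, $\epsilon_h\sim\mathcal N(0,\sigma^2I)$ i.i.d., $h=0,\dots,H-1$, and $P(\cdot\mid W,x,u)=\mathcal N(W\phi(x,u),\sigma^2I)$. $W^\star$ is the true model. A policy is $\pi:\mathcal X\times\{0,\dots,H-1\}\to\mathcal U$ with $u_h=\pi(x_h,h)$. Cost-to-go: $J^\pi_h(x;c,W)=\mathbb E[\sum_{\ell=h}^{H-1}c(x_\ell,u_\ell)\mid\pi,x_h=x,W]$, with $J^\pi_H\equiv0$. *)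

theory Defs
  imports "HOL-Probability.Probability"
begin

definition gauss :: "real^'d \<Rightarrow> real \<Rightarrow> (real^'d) measure" where
  "gauss mu \<sigma> = density lborel (\<lambda>y. ennreal (\<Prod>i\<in>UNIV. normal_density (mu$i) \<sigma> (y$i)))"

definition trans :: "('h \<Rightarrow> real^'d) \<Rightarrow> (real^'d \<Rightarrow> 'u \<Rightarrow> 'h) \<Rightarrow> real
    \<Rightarrow> real^'d \<Rightarrow> 'u \<Rightarrow> (real^'d) measure" where
  "trans W \<phi> \<sigma> x u = gauss (W (\<phi> x u)) \<sigma>"

definition pathS :: "(nat \<Rightarrow> real^'d) measure" where
  "pathS = PiM UNIV (\<lambda>_. borel)"

text \<open>traj W phi sigma pi n h x: law of the trajectory of policy pi in model W started in
  state x at time h, run for n steps; coordinate l (h \<le> l \<le> h+n) is the state x_l.\<close>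
fun traj :: "('h \<Rightarrow> real^'d) \<Rightarrow> (real^'d \<Rightarrow> 'u \<Rightarrow> 'h) \<Rightarrow> real \<Rightarrow> (real^'d \<Rightarrow> nat \<Rightarrow> 'u)
    \<Rightarrow> nat \<Rightarrow> nat \<Rightarrow> real^'d \<Rightarrow> (nat \<Rightarrow> real^'d) measure" where
  "traj W \<phi> \<sigma> \<pi> 0 h x = return pathS (\<lambda>_. x)"
| "traj W \<phi> \<sigma> \<pi> (Suc n) h x =
     bind (trans W \<phi> \<sigma> x (\<pi> x h))
       (\<lambda>y. distr (traj W \<phi> \<sigma> \<pi> n (Suc h) y) pathS (\<lambda>\<omega>. fun_upd \<omega> h x))"

text \<open>Cost-to-go J^pi_h(x; c, W) = E[sum_{l=h}^{H-1} c(x_l,u_l) | pi, x_h = x, W] (in [0,\<infinity>]).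
  For h \<ge> H the sum is empty, so J_H = 0.\<close>
definition ctg :: "('h \<Rightarrow> real^'d) \<Rightarrow> (real^'d \<Rightarrow> 'u \<Rightarrow> 'h) \<Rightarrow> real \<Rightarrow> (real^'d \<Rightarrow> nat \<Rightarrow> 'u)
    \<Rightarrow> nat \<Rightarrow> (real^'d \<Rightarrow> 'u \<Rightarrow> real) \<Rightarrow> nat \<Rightarrow> real^'d \<Rightarrow> ennreal" where
  "ctg W \<phi> \<sigma> \<pi> H c h x =
     (\<integral>\<^sup>+ \<omega>. ennreal (\<Sum>l\<in>{h..<H}. c (\<omega> l) (\<pi> (\<omega> l) l)) \<partial>traj W \<phi> \<sigma> \<pi> (H - h) h x)"

end

theory Submission
  imports Defs
begin

text \<open>
  Let \<open>P\<close>, \<open>P\<^sup>*\<close> be the transitions of \<open>W\<close>, \<open>W\<^sup>*\<close> and \<open>J\<^sub>m\<^sub>i\<^sub>n = min J J\<^sup>*\<close>. The Bellman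
  equations of \<open>J\<close> and \<open>J\<^sup>*\<close> share the stage cost, so wherever \<open>J\<^sub>h(x) < J\<^sup>*\<^sub>h(x)\<close>
  \<open>J\<^sup>*\<^sub>h(x) - J\<^sub>h(x) \<le> (\<integral>J\<^sup>*\<^sub>h\<^sub>+\<^sub>1 dP\<^sup>* - \<integral>J\<^sub>m\<^sub>i\<^sub>n dP\<^sup>*) + (\<integral>J\<^sub>m\<^sub>i\<^sub>n dP\<^sup>* - \<integral>J\<^sub>m\<^sub>i\<^sub>n dP)\<close>.
  The second bracket is the summand of the theorem; the first is the \<open>P\<^sup>*\<close>-expectation of the
  positive part of the gap at time \<open>h + 1\<close>, to which the same estimate applies again.
  Unrolling along the true dynamics until the gap stops being positive, i.e. up to \<tau>, gives
  the bound. Since the cost-to-go may be infinite, the recursion is carried out in \<open>ennreal\<close>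
  with the gaps moved to the other side; passing to real numbers at the end needs only
  \<open>J\<^sub>0(x\<^sub>0) < \<infinity>\<close> and \<open>J\<^sup>*\<^sub>0(x\<^sub>0) < \<infinity>\<close>, the latter because the total cost is square integrable.
\<close>

lemma less_Least_iff:
  fixes P :: "nat \<Rightarrow> bool"
  assumes "P m"
  shows "h < (LEAST k. P k) \<longleftrightarrow> (\<forall>k\<in>{0..h}. \<not> P k)"
proof
  assume "h < (LEAST k. P k)"
  then show "\<forall>k\<in>{0..h}. \<not> P k"
    by (meson atLeastAtMost_iff le_less_trans not_less_Least)
next
  assume "\<forall>k\<in>{0..h}. \<not> P k"
  moreover have "P (LEAST k. P k)"
    using assms by (rule LeastI)
  ultimately show "h < (LEAST k. P k)"
    by (meson atLeastAtMost_iff le0 not_le)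
qed

lemma (in prob_space) nn_integral_const_add:
  "g \<in> borel_measurable M \<Longrightarrow> (\<integral>\<^sup>+x. a + g x \<partial>M) = a + (\<integral>\<^sup>+x. g x \<partial>M)"
  by (simp add: nn_integral_add emeasure_space_1)

lemma (in prob_space) nn_integral_less_top_if_square:
  assumes "f \<in> borel_measurable M" "(\<integral>\<^sup>+x. ennreal ((f x)\<^sup>2) \<partial>M) < \<infinity>"
  shows "(\<integral>\<^sup>+x. ennreal (f x) \<partial>M) < \<infinity>"
proof -
  have "ennreal s \<le> 1 + ennreal (s\<^sup>2)" for s :: real
  proof -
    have "0 \<le> (s - 1/2)\<^sup>2"
      by simp
    then have "s \<le> 1 + s\<^sup>2"
      by (simp add: power2_eq_square algebra_simps)
    then show ?thesis
      using ennreal_leI by (fastforce simp: ennreal_plus)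
  qed
  then have "(\<integral>\<^sup>+x. ennreal (f x) \<partial>M) \<le> (\<integral>\<^sup>+x. 1 + ennreal ((f x)\<^sup>2) \<partial>M)"
    by (intro nn_integral_mono)
  also have "\<dots> = 1 + (\<integral>\<^sup>+x. ennreal ((f x)\<^sup>2) \<partial>M)"
    using assms(1) by (intro nn_integral_const_add) measurable
  finally show ?thesis
    using assms(2) by (simp add: order_le_less_trans ennreal_add_less_top)
qed

lemma
  fixes g :: "'i \<Rightarrow> 'a \<Rightarrow> ennreal"
  assumes "finite A" and [measurable]: "\<And>l. g l \<in> borel_measurable M"
    and fin: "(\<integral>\<^sup>+x. (\<Sum>l\<in>A. g l x) \<partial>M) < \<infinity>"
  shows integrable_sum_enn2real: "integrable M (\<lambda>x. \<Sum>l\<in>A. enn2real (g l x))"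
    and integral_sum_enn2real:
      "(\<integral>x. (\<Sum>l\<in>A. enn2real (g l x)) \<partial>M) = enn2real (\<integral>\<^sup>+x. (\<Sum>l\<in>A. g l x) \<partial>M)"
proof -
  have "AE x in M. (\<Sum>l\<in>A. g l x) \<noteq> \<infinity>"
    using fin by (intro nn_integral_noteq_infinite) auto
  then have sum_eq: "AE x in M. (\<Sum>l\<in>A. g l x) = ennreal (\<Sum>l\<in>A. enn2real (g l x))"
  proof eventually_elim
    case (elim x)
    then have "g l x < \<top>" if "l \<in> A" for l
      using \<open>finite A\<close> that by (simp add: less_top)
    then have "(\<Sum>l\<in>A. g l x) = (\<Sum>l\<in>A. ennreal (enn2real (g l x)))"
      by (intro sum.cong) auto
    then show ?case
      by (simp add: sum_ennreal)
  qed
  then show "integrable M (\<lambda>x. \<Sum>l\<in>A. enn2real (g l x))"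
    using fin by (intro integrableI_nonneg) (auto simp: sum_nonneg nn_integral_cong_AE)
  show "(\<integral>x. (\<Sum>l\<in>A. enn2real (g l x)) \<partial>M) = enn2real (\<integral>\<^sup>+x. (\<Sum>l\<in>A. g l x) \<partial>M)"
    using sum_eq by (intro enn2real_nn_integral_eq_integral[symmetric]) (auto simp: sum_nonneg)
qed

lemma integral_enn2real:
  fixes f :: "'a \<Rightarrow> ennreal"
  assumes "f \<in> borel_measurable M" "\<And>x. f x < \<infinity>"
  shows "(\<integral>x. enn2real (f x) \<partial>M) = enn2real (\<integral>\<^sup>+x. f x \<partial>M)"
  using assms by (intro enn2real_nn_integral_eq_integral[symmetric]) auto

declare borel_measurable_nth [measurable]

lemma borel_measurable_bounded_linear:
  "bounded_linear f \<Longrightarrow> f \<in> borel_measurable borel"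
  by (intro borel_measurable_continuous_onI linear_continuous_on)

lemma prod_vec_nth_eq_prod_Basis:
  fixes mu y :: "real^'d"
  shows "(\<Prod>i\<in>UNIV. g (mu$i) (y$i)) = (\<Prod>b\<in>Basis. g (mu \<bullet> b) (y \<bullet> b))"
proof -
  have basis: "(Basis :: (real^'d) set) = (\<lambda>i. axis i 1) ` UNIV"
    by (auto simp: Basis_vec_def)
  have "inj_on (\<lambda>i::'d. axis i (1::real)) UNIV"
    by (auto simp: inj_on_def axis_eq_axis)
  then show ?thesis
    unfolding basis by (simp add: prod.reindex inner_axis)
qed

lemma prob_space_gauss:
  assumes "\<sigma> > 0"
  shows "prob_space (gauss mu \<sigma>)"
proof
  have "emeasure (gauss mu \<sigma>) (space (gauss mu \<sigma>)) =
     (\<integral>\<^sup>+y. ennreal (\<Prod>i\<in>UNIV. normal_density (mu$i) \<sigma> (y$i)) \<partial>lborel)"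
    by (simp add: gauss_def emeasure_density)
  also have "\<dots> = (\<integral>\<^sup>+y. (\<Prod>b\<in>Basis. ennreal (normal_density (mu \<bullet> b) \<sigma> (y \<bullet> b))) \<partial>lborel)"
    unfolding prod_vec_nth_eq_prod_Basis[where g="\<lambda>m. normal_density m \<sigma>"]
    by (simp add: prod_ennreal normal_density_nonneg)
  also have "\<dots> = (\<Prod>b\<in>(Basis::(real^'a) set). \<integral>\<^sup>+x. normal_density (mu \<bullet> b) \<sigma> x \<partial>lborel)"
    by (rule nn_integral_lborel_prod) auto
  also have "\<dots> = 1"
  proof (rule prod.neutral, rule ballI)
    fix b :: "real^'a"
    interpret prob_space "density lborel (normal_density (mu \<bullet> b) \<sigma>)"
      using assms by (rule prob_space_normal_density)
    show "(\<integral>\<^sup>+x. normal_density (mu \<bullet> b) \<sigma> x \<partial>lborel) = 1"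
      using emeasure_space_1 by (simp add: emeasure_density)
  qed
  finally show "emeasure (gauss mu \<sigma>) (space (gauss mu \<sigma>)) = 1" .
qed

lemma measurable_gauss:
  assumes "\<sigma> > 0"
  shows "(\<lambda>mu. gauss mu \<sigma>) \<in> borel \<rightarrow>\<^sub>M prob_algebra (borel :: (real^'d) measure)"
proof (rule measurable_prob_algebraI)
  show "prob_space (gauss mu \<sigma>)" for mu
    using assms by (rule prob_space_gauss)
  show "(\<lambda>mu. gauss mu \<sigma>) \<in> borel \<rightarrow>\<^sub>M subprob_algebra (borel :: (real^'d) measure)"
  proof (rule measurable_subprob_algebra)
    show "subprob_space (gauss mu \<sigma>)" for mu
      using assms by (intro prob_space_imp_subprob_space prob_space_gauss)
    show "sets (gauss mu \<sigma>) = sets borel" for mu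
      by (simp add: gauss_def)
    fix A :: "(real^'d) set"
    assume A: "A \<in> sets borel"
    then have "(\<lambda>mu. emeasure (gauss mu \<sigma>) A) = (\<lambda>mu. \<integral>\<^sup>+y.
        ennreal (\<Prod>i\<in>UNIV. normal_density (mu$i) \<sigma> (y$i)) * indicator A y \<partial>lborel)"
      by (simp add: gauss_def emeasure_density)
    also have "\<dots> \<in> borel_measurable borel"
      using A by (intro lborel.borel_measurable_nn_integral) (simp add: normal_density_def)
    finally show "(\<lambda>mu. emeasure (gauss mu \<sigma>) A) \<in> borel_measurable borel" .
  qed
qed

lemma sets_trans [simp]: "sets (trans W \<phi> \<sigma> x u) = sets borel"
  by (simp add: trans_def gauss_def)

lemma measurable_trans_iff [simp]:
  "f \<in> borel_measurable (trans W \<phi> \<sigma> x u) \<longleftrightarrow> f \<in> borel_measurable borel"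
  by (simp only: measurable_cong_sets[OF sets_trans refl])

lemma measurable_path_nth [measurable]:
  "(\<lambda>w. w l) \<in> (pathS :: (nat \<Rightarrow> real^'d) measure) \<rightarrow>\<^sub>M borel"
  unfolding pathS_def by simp

lemma measurable_path_fun_upd:
  assumes "g \<in> M \<rightarrow>\<^sub>M borel"
  shows "(\<lambda>(p, w). w(h := g p)) \<in> M \<Otimes>\<^sub>M pathS \<rightarrow>\<^sub>M (pathS :: (nat \<Rightarrow> real^'d) measure)"
proof -
  have "(\<lambda>p. (snd p)(h := g (fst p))) \<in> M \<Otimes>\<^sub>M pathS \<rightarrow>\<^sub>M (pathS :: (nat \<Rightarrow> real^'d) measure)"
    unfolding pathS_def using assms
    by (intro measurable_fun_upd[where J=UNIV]) auto
  then show ?thesis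
    by (simp add: case_prod_beta')
qed

locale gaussian_closed_loop =
  fixes \<phi> :: "real^'d \<Rightarrow> 'u \<Rightarrow> 'h::{real_inner,complete_space}"
    and \<sigma> :: real and \<pi> :: "real^'d \<Rightarrow> nat \<Rightarrow> 'u"
  assumes sigma_pos: "\<sigma> > 0"
    and measurable_feature: "\<And>h. (\<lambda>x. \<phi> x (\<pi> x h)) \<in> borel_measurable borel"
begin

lemma prob_space_trans: "prob_space (trans W \<phi> \<sigma> x u)"
  unfolding trans_def using sigma_pos by (rule prob_space_gauss)

lemma measurable_trans:
  assumes "bounded_linear W"
  shows "(\<lambda>x. trans W \<phi> \<sigma> x (\<pi> x h)) \<in> borel \<rightarrow>\<^sub>M prob_algebra borel"
  unfolding trans_def
  by (rule measurable_compose[OF measurable_compose[OF measurable_feature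
        borel_measurable_bounded_linear[OF assms]] measurable_gauss[OF sigma_pos]])

lemma measurable_traj:
  assumes W: "bounded_linear W"
  shows "(\<lambda>x. traj W \<phi> \<sigma> \<pi> n h x) \<in> borel \<rightarrow>\<^sub>M prob_algebra pathS"
proof (induction n arbitrary: h)
  case 0
  have "(\<lambda>x::real^'d. \<lambda>_::nat. x) \<in> borel \<rightarrow>\<^sub>M pathS"
    unfolding pathS_def by (rule measurable_PiM_single') auto
  then show ?case
    by (simp add: measurable_compose[OF _ measurable_return_prob_space])
next
  case (Suc n)
  have "(\<lambda>p. distr (traj W \<phi> \<sigma> \<pi> n (Suc h) (snd p)) pathS (\<lambda>w. w(h := fst p)))
      \<in> borel \<Otimes>\<^sub>M borel \<rightarrow>\<^sub>M prob_algebra pathS"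
    by (rule measurable_distr_prob_space2[OF measurable_compose[OF measurable_snd Suc.IH]
          measurable_path_fun_upd]) measurable
  then show ?case
    by (simp add: case_prod_beta' measurable_bind_prob_space2[OF measurable_trans[OF W]])
qed

lemma
  assumes "bounded_linear W"
  shows prob_space_traj: "prob_space (traj W \<phi> \<sigma> \<pi> n h x)"
    and sets_traj [simp]: "sets (traj W \<phi> \<sigma> \<pi> n h x) = sets pathS"
  using measurable_space[OF measurable_traj[OF assms], of x] by (simp_all add: space_prob_algebra)

lemma measurable_traj_iff:
  "bounded_linear W \<Longrightarrow>
    f \<in> borel_measurable (traj W \<phi> \<sigma> \<pi> n h x) \<longleftrightarrow> f \<in> borel_measurable pathS"
  by (simp only: measurable_cong_sets[OF sets_traj refl])

lemma measurable_nn_integral_traj: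
  assumes "bounded_linear W" "f \<in> borel_measurable pathS"
  shows "(\<lambda>x. \<integral>\<^sup>+w. f w \<partial>traj W \<phi> \<sigma> \<pi> n h x) \<in> borel_measurable borel"
  using measurable_compose[OF measurable_prob_algebraD[OF measurable_traj]
      nn_integral_measurable_subprob_algebra] assms by simp

lemma nn_integral_traj_Suc:
  assumes W: "bounded_linear W" and f: "f \<in> borel_measurable pathS"
  shows "(\<integral>\<^sup>+w. f w \<partial>traj W \<phi> \<sigma> \<pi> (Suc n) h x) =
     (\<integral>\<^sup>+y. (\<integral>\<^sup>+w. f (w(h := x)) \<partial>traj W \<phi> \<sigma> \<pi> n (Suc h) y) \<partial>trans W \<phi> \<sigma> x (\<pi> x h))"
proof -
  have "(\<lambda>y. distr (traj W \<phi> \<sigma> \<pi> n (Suc h) y) pathS (\<lambda>w. w(h := x)))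
     \<in> borel \<rightarrow>\<^sub>M prob_algebra pathS"
    by (rule measurable_distr_prob_space2[OF measurable_traj[OF W] measurable_path_fun_upd]) simp
  then have kernel: "(\<lambda>y. distr (traj W \<phi> \<sigma> \<pi> n (Suc h) y) pathS (\<lambda>w. w(h := x)))
     \<in> trans W \<phi> \<sigma> x (\<pi> x h) \<rightarrow>\<^sub>M subprob_algebra pathS"
    unfolding measurable_cong_sets[OF sets_trans refl] by (rule measurable_prob_algebraD)
  have "(\<lambda>w::nat \<Rightarrow> real^'d. w(h := x)) \<in> pathS \<rightarrow>\<^sub>M pathS"
    unfolding pathS_def by (rule measurable_fun_upd[where J=UNIV]) auto
  then have upd: "(\<lambda>w. w(h := x)) \<in> traj W \<phi> \<sigma> \<pi> n (Suc h) y \<rightarrow>\<^sub>M pathS" for y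
    by (simp only: measurable_cong_sets[OF sets_traj[OF W] refl])
  have "f \<in> borel_measurable (distr (traj W \<phi> \<sigma> \<pi> n (Suc h) y) pathS (\<lambda>w. w(h := x)))" for y
    using f by simp
  then show ?thesis
    by (simp only: traj.simps nn_integral_bind[OF f kernel] nn_integral_distr[OF upd])
qed

end

(* trajectories are unrolled only through nn_integral_traj_Suc *)
declare traj.simps(2) [simp del]

locale closed_loop_cost = gaussian_closed_loop \<phi> \<sigma> \<pi>
  for \<phi> :: "real^'d \<Rightarrow> 'u \<Rightarrow> 'h::{real_inner,complete_space}" and \<sigma> \<pi> +
  fixes c :: "real^'d \<Rightarrow> 'u \<Rightarrow> real" and H :: nat
  assumes cost_nonneg: "\<And>x u. 0 \<le> c x u"
    and measurable_cost [measurable]: "\<And>h. (\<lambda>x. c x (\<pi> x h)) \<in> borel_measurable borel"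
begin

lemma measurable_cost_sum [measurable]:
  "(\<lambda>w. ennreal (\<Sum>l\<in>{h..<H}. c (w l) (\<pi> (w l) l))) \<in> borel_measurable pathS"
  by measurable

lemma measurable_ctg [measurable]:
  "bounded_linear V \<Longrightarrow> ctg V \<phi> \<sigma> \<pi> H c h \<in> borel_measurable borel"
  unfolding ctg_def by (rule measurable_nn_integral_traj) measurable

lemma ctg_H [simp]: "ctg V \<phi> \<sigma> \<pi> H c H x = 0"
  by (simp add: ctg_def)

lemma ctg_Suc:
  assumes V: "bounded_linear V" and h: "h < H"
  shows "ctg V \<phi> \<sigma> \<pi> H c h x =
    c x (\<pi> x h) + (\<integral>\<^sup>+y. ctg V \<phi> \<sigma> \<pi> H c (Suc h) y \<partial>trans V \<phi> \<sigma> x (\<pi> x h))"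
proof -
  have "(\<Sum>l\<in>{h..<H}. c ((w(h := x)) l) (\<pi> ((w(h := x)) l) l))
      = c x (\<pi> x h) + (\<Sum>l\<in>{Suc h..<H}. c (w l) (\<pi> (w l) l))" for w
    using h by (simp add: sum.atLeast_Suc_lessThan)
  then have split_first: "ennreal (\<Sum>l\<in>{h..<H}. c ((w(h := x)) l) (\<pi> ((w(h := x)) l) l))
      = c x (\<pi> x h) + ennreal (\<Sum>l\<in>{Suc h..<H}. c (w l) (\<pi> (w l) l))" for w
    by (simp add: ennreal_plus cost_nonneg sum_nonneg)
  have "H - h = Suc (H - Suc h)"
    using h by simp
  then have "ctg V \<phi> \<sigma> \<pi> H c h x = (\<integral>\<^sup>+y. (\<integral>\<^sup>+w. c x (\<pi> x h) +
      ennreal (\<Sum>l\<in>{Suc h..<H}. c (w l) (\<pi> (w l) l)) \<partial>traj V \<phi> \<sigma> \<pi> (H - Suc h) (Suc h) y)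
      \<partial>trans V \<phi> \<sigma> x (\<pi> x h))"
    unfolding ctg_def by (simp only: nn_integral_traj_Suc[OF V] measurable_cost_sum split_first)
  also have "\<dots> = (\<integral>\<^sup>+y. c x (\<pi> x h) + ctg V \<phi> \<sigma> \<pi> H c (Suc h) y \<partial>trans V \<phi> \<sigma> x (\<pi> x h))"
    unfolding ctg_def using measurable_cost_sum
    by (intro nn_integral_cong prob_space.nn_integral_const_add prob_space_traj V)
      (simp add: measurable_traj_iff[OF V])
  also have "\<dots> = c x (\<pi> x h) + (\<integral>\<^sup>+y. ctg V \<phi> \<sigma> \<pi> H c (Suc h) y \<partial>trans V \<phi> \<sigma> x (\<pi> x h))"
    using prob_space_trans V by (simp add: prob_space.nn_integral_const_add)
  finally show ?thesis .
qed

end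

locale model_mismatch = closed_loop_cost \<phi> \<sigma> \<pi> c H
  for \<phi> :: "real^'d \<Rightarrow> 'u \<Rightarrow> 'h::{real_inner,complete_space}" and \<sigma> \<pi> c H +
  fixes W W_star :: "'h \<Rightarrow> real^'d"
  assumes bounded_linear_W: "bounded_linear W"
    and bounded_linear_W_star: "bounded_linear W_star"
begin

abbreviation J :: "nat \<Rightarrow> real^'d \<Rightarrow> ennreal" where
  "J \<equiv> ctg W \<phi> \<sigma> \<pi> H c"

abbreviation J_star :: "nat \<Rightarrow> real^'d \<Rightarrow> ennreal" where
  "J_star \<equiv> ctg W_star \<phi> \<sigma> \<pi> H c"

abbreviation J_min :: "nat \<Rightarrow> real^'d \<Rightarrow> ennreal" where
  "J_min h x \<equiv> min (J h x) (J_star h x)"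

abbreviation true_traj :: "nat \<Rightarrow> nat \<Rightarrow> real^'d \<Rightarrow> (nat \<Rightarrow> real^'d) measure" where
  "true_traj \<equiv> traj W_star \<phi> \<sigma> \<pi>"

definition next_value :: "('h \<Rightarrow> real^'d) \<Rightarrow> nat \<Rightarrow> real^'d \<Rightarrow> ennreal" where
  "next_value V l y = (\<integral>\<^sup>+x'. J_min (Suc l) x' \<partial>trans V \<phi> \<sigma> y (\<pi> y l))"

text \<open>\<open>alive 0 l w\<close> is the event \<open>l < \<tau>\<close>. For a trajectory started at time \<open>h\<close>,
  \<open>traj\<close> fills the coordinates before \<open>h\<close> with junk, so stopping is measured from \<open>h\<close> on.\<close>
definition alive :: "nat \<Rightarrow> nat \<Rightarrow> (nat \<Rightarrow> real^'d) \<Rightarrow> bool" where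
  "alive h l w \<longleftrightarrow> (\<forall>k\<in>{h..l}. J k (w k) < J_star k (w k))"

definition stopped_sum :: "(nat \<Rightarrow> real^'d \<Rightarrow> ennreal) \<Rightarrow> nat \<Rightarrow> (nat \<Rightarrow> real^'d) \<Rightarrow> ennreal"
  where "stopped_sum f h w = (\<Sum>l\<in>{h..<H}. if alive h l w then f l (w l) else 0)"

lemma measurable_next_value [measurable]:
  assumes "bounded_linear V"
  shows "next_value V l \<in> borel_measurable borel"
proof -
  have "J_min (Suc l) \<in> borel_measurable borel"
    using bounded_linear_W bounded_linear_W_star by measurable
  then show ?thesis
    unfolding next_value_def
    using measurable_compose[OF measurable_prob_algebraD[OF measurable_trans[OF assms]]
        nn_integral_measurable_subprob_algebra]
    by simp
qed

lemma measurable_stopped_sum [measurable]: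
  assumes [measurable]: "\<And>l. f l \<in> borel_measurable borel"
  shows "stopped_sum f h \<in> borel_measurable pathS"
  using bounded_linear_W bounded_linear_W_star
  unfolding stopped_sum_def alive_def by measurable

lemma stopped_sum_H [simp]: "stopped_sum f H w = 0"
  by (simp add: stopped_sum_def)

lemma alive_fun_upd:
  "h < l \<Longrightarrow> alive h l (w(h := x)) \<longleftrightarrow> J h x < J_star h x \<and> alive (Suc h) l w"
  unfolding alive_def
  by (auto simp: Ball_def)

lemma stopped_sum_fun_upd:
  assumes "h < H"
  shows "stopped_sum f h (w(h := x)) =
    (if J h x < J_star h x then f h x + stopped_sum f (Suc h) w else 0)"
proof -
  have "(\<Sum>l\<in>{Suc h..<H}. if alive h l (w(h := x)) then f l ((w(h := x)) l) else 0) =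
      (\<Sum>l\<in>{Suc h..<H}. if J h x < J_star h x \<and> alive (Suc h) l w then f l (w l) else 0)"
    by (intro sum.cong) (auto simp: alive_fun_upd)
  moreover have "alive h h (w(h := x)) \<longleftrightarrow> J h x < J_star h x"
    by (simp add: alive_def)
  ultimately show ?thesis
    using assms by (simp add: stopped_sum_def sum.atLeast_Suc_lessThan)
qed

lemma nn_integral_stopped_sum_Suc:
  assumes [measurable]: "\<And>l. f l \<in> borel_measurable borel" and h: "h < H"
  shows "(\<integral>\<^sup>+w. stopped_sum f h w \<partial>true_traj (Suc n) h x) =
    (if J h x < J_star h x
     then f h x + (\<integral>\<^sup>+y. (\<integral>\<^sup>+w. stopped_sum f (Suc h) w \<partial>true_traj n (Suc h) y)
                        \<partial>trans W_star \<phi> \<sigma> x (\<pi> x h))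
     else 0)"
proof -
  have "(\<integral>\<^sup>+w. stopped_sum f h w \<partial>true_traj (Suc n) h x) =
      (\<integral>\<^sup>+y. (\<integral>\<^sup>+w. (if J h x < J_star h x then f h x + stopped_sum f (Suc h) w else 0)
        \<partial>true_traj n (Suc h) y) \<partial>trans W_star \<phi> \<sigma> x (\<pi> x h))"
    by (simp only: nn_integral_traj_Suc[OF bounded_linear_W_star measurable_stopped_sum[OF assms(1)]]
        stopped_sum_fun_upd[OF h])
  also have "\<dots> = (if J h x < J_star h x
     then f h x + (\<integral>\<^sup>+y. (\<integral>\<^sup>+w. stopped_sum f (Suc h) w \<partial>true_traj n (Suc h) y)
                        \<partial>trans W_star \<phi> \<sigma> x (\<pi> x h))
     else 0)"
    using prob_space_trans prob_space_traj[OF bounded_linear_W_star]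
      measurable_nn_integral_traj[OF bounded_linear_W_star]
    by (simp add: prob_space.nn_integral_const_add measurable_traj_iff[OF bounded_linear_W_star])
  finally show ?thesis .
qed

lemma measurable_nn_integral_stopped_sum:
  "(\<And>l. f l \<in> borel_measurable borel) \<Longrightarrow>
    (\<lambda>y. \<integral>\<^sup>+w. stopped_sum f h w \<partial>true_traj n h y) \<in> borel_measurable borel"
  by (intro measurable_nn_integral_traj bounded_linear_W_star measurable_stopped_sum)

lemma J_star_plus_stopped_sum_le:
  "h + n = H \<Longrightarrow>
    J_star h x + (\<integral>\<^sup>+w. stopped_sum (next_value W) h w \<partial>true_traj n h x)
    \<le> J_min h x + (\<integral>\<^sup>+w. stopped_sum (next_value W_star) h w \<partial>true_traj n h x)"
proof (induction n arbitrary: h x)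
  case 0
  then show ?case by simp
next
  case (Suc n)
  then have h: "h < H" and IH_index: "Suc h + n = H" by auto
  let ?P = "trans W_star \<phi> \<sigma> x (\<pi> x h)"
  let ?c = "ennreal (c x (\<pi> x h))"
  define A where "A y = (\<integral>\<^sup>+w. stopped_sum (next_value W_star) (Suc h) w \<partial>true_traj n (Suc h) y)" for y
  define B where "B y = (\<integral>\<^sup>+w. stopped_sum (next_value W) (Suc h) w \<partial>true_traj n (Suc h) y)" for y
  have [measurable]: "A \<in> borel_measurable borel" "B \<in> borel_measurable borel"
    "J_star (Suc h) \<in> borel_measurable borel"
    unfolding A_def B_def
    by (intro measurable_nn_integral_stopped_sum measurable_next_value bounded_linear_W
        bounded_linear_W_star measurable_ctg)+
  note unroll = nn_integral_stopped_sum_Suc[OF measurable_next_value h]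
  show ?case
  proof (cases "J h x < J_star h x")
    case False
    then show ?thesis
      by (simp add: unroll[OF bounded_linear_W] unroll[OF bounded_linear_W_star])
  next
    case True
    have "J_star h x + (\<integral>\<^sup>+w. stopped_sum (next_value W) h w \<partial>true_traj (Suc n) h x)
        = ?c + next_value W h x + ((\<integral>\<^sup>+y. J_star (Suc h) y \<partial>?P) + (\<integral>\<^sup>+y. B y \<partial>?P))"
      using True
      by (simp add: unroll[OF bounded_linear_W] ctg_Suc[OF bounded_linear_W_star h] B_def ac_simps)
    also have "\<dots> = ?c + next_value W h x + (\<integral>\<^sup>+y. J_star (Suc h) y + B y \<partial>?P)"
      by (simp add: nn_integral_add)
    also have "\<dots> \<le> ?c + next_value W h x + (\<integral>\<^sup>+y. J_min (Suc h) y + A y \<partial>?P)"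
      using Suc.IH[OF IH_index] unfolding A_def B_def
      by (intro add_left_mono nn_integral_mono) simp
    also have "\<dots> = ?c + next_value W h x + (next_value W_star h x + (\<integral>\<^sup>+y. A y \<partial>?P))"
      using bounded_linear_W bounded_linear_W_star
      by (simp add: nn_integral_add next_value_def)
    also have "\<dots> \<le> ?c + (\<integral>\<^sup>+y. J (Suc h) y \<partial>trans W \<phi> \<sigma> x (\<pi> x h))
        + (next_value W_star h x + (\<integral>\<^sup>+y. A y \<partial>?P))"
      unfolding next_value_def by (intro add_right_mono add_left_mono nn_integral_mono) simp
    also have "\<dots> = J_min h x + (\<integral>\<^sup>+w. stopped_sum (next_value W_star) h w \<partial>true_traj (Suc n) h x)"
      using True
      by (simp add: unroll[OF bounded_linear_W_star] ctg_Suc[OF bounded_linear_W h] A_def ac_simps)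
    finally show ?thesis .
  qed
qed

lemma stopped_sum_next_value_le:
  "h + n = H \<Longrightarrow>
    (\<integral>\<^sup>+w. stopped_sum (next_value W_star) h w \<partial>true_traj n h x) \<le> of_nat n * J_star h x"
proof (induction n arbitrary: h x)
  case 0
  then show ?case by simp
next
  case (Suc n)
  then have h: "h < H" and IH_index: "Suc h + n = H" by auto
  let ?P = "trans W_star \<phi> \<sigma> x (\<pi> x h)"
  define A where "A y = (\<integral>\<^sup>+w. stopped_sum (next_value W_star) (Suc h) w \<partial>true_traj n (Suc h) y)" for y
  have step: "(\<integral>\<^sup>+y. J_star (Suc h) y \<partial>?P) \<le> J_star h x"
    by (simp add: ctg_Suc[OF bounded_linear_W_star h])
  have "next_value W_star h x \<le> (\<integral>\<^sup>+y. J_star (Suc h) y \<partial>?P)"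
    unfolding next_value_def by (intro nn_integral_mono) simp
  then have "(\<integral>\<^sup>+w. stopped_sum (next_value W_star) h w \<partial>true_traj (Suc n) h x)
      \<le> J_star h x + (\<integral>\<^sup>+y. A y \<partial>?P)"
    using step
    by (auto simp: nn_integral_stopped_sum_Suc[OF measurable_next_value[OF bounded_linear_W_star] h]
        A_def intro: add_right_mono order_trans)
  also have "\<dots> \<le> J_star h x + (\<integral>\<^sup>+y. of_nat n * J_star (Suc h) y \<partial>?P)"
    using Suc.IH[OF IH_index] unfolding A_def by (intro add_left_mono nn_integral_mono) simp
  also have "\<dots> = J_star h x + of_nat n * (\<integral>\<^sup>+y. J_star (Suc h) y \<partial>?P)"
    using bounded_linear_W_star by (simp add: nn_integral_cmult)
  also have "\<dots> \<le> of_nat (Suc n) * J_star h x"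
    using step by (simp add: distrib_right mult_left_mono)
  finally show ?case .
qed

lemma cost_gap_le_stopped_sums:
  assumes "J 0 x < \<infinity>" "J_star 0 x < \<infinity>"
  shows "(\<integral>\<^sup>+w. stopped_sum (next_value W_star) 0 w \<partial>true_traj H 0 x) < \<infinity>"
    and "(\<integral>\<^sup>+w. stopped_sum (next_value W) 0 w \<partial>true_traj H 0 x) < \<infinity>"
    and "enn2real (J_star 0 x) - enn2real (J 0 x)
      \<le> enn2real (\<integral>\<^sup>+w. stopped_sum (next_value W_star) 0 w \<partial>true_traj H 0 x)
        - enn2real (\<integral>\<^sup>+w. stopped_sum (next_value W) 0 w \<partial>true_traj H 0 x)"
proof -
  let ?A = "\<integral>\<^sup>+w. stopped_sum (next_value W_star) 0 w \<partial>true_traj H 0 x"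
  let ?B = "\<integral>\<^sup>+w. stopped_sum (next_value W) 0 w \<partial>true_traj H 0 x"
  have "J_star 0 x + ?B \<le> J_min 0 x + ?A"
    using J_star_plus_stopped_sum_le[of 0 H x] by simp
  also have "\<dots> \<le> J 0 x + ?A"
    by (simp add: add_right_mono)
  finally have le: "J_star 0 x + ?B \<le> J 0 x + ?A" .
  have "?A \<le> of_nat H * J_star 0 x"
    using stopped_sum_next_value_le[of 0 H x] by simp
  also have "\<dots> < \<infinity>"
    using assms(2) by (simp add: ennreal_mult_less_top of_nat_less_top)
  finally show A: "?A < \<infinity>" .
  have "?B \<le> J 0 x + ?A"
    using le by (rule order_trans[rotated]) simp
  also have "\<dots> < \<infinity>"
    using assms(1) A by (simp add: ennreal_add_less_top)
  finally show B: "?B < \<infinity>" .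
  have "enn2real (J_star 0 x + ?B) \<le> enn2real (J 0 x + ?A)"
    using le assms A by (intro enn2real_mono) (auto simp: ennreal_add_less_top)
  then show "enn2real (J_star 0 x) - enn2real (J 0 x) \<le> enn2real ?A - enn2real ?B"
    using assms A B by (simp add: enn2real_plus)
qed

lemma less_stop_time_iff_alive:
  "l < (LEAST k. J_star k (w k) \<le> J k (w k)) \<longleftrightarrow> alive 0 l w"
  by (subst less_Least_iff[where m=H]) (auto simp: alive_def not_le)

lemma integral_J_min_eq_next_value:
  assumes "\<And>h y. J h y < \<infinity>" "bounded_linear V"
  shows "(\<integral>x'. enn2real (J_min (Suc l) x') \<partial>trans V \<phi> \<sigma> y (\<pi> y l)) = enn2real (next_value V l y)"
  unfolding next_value_def using assms bounded_linear_W bounded_linear_W_star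
  by (intro integral_enn2real) (auto simp: min.strict_coboundedI1)

lemma cost_gap_le:
  assumes J_finite: "\<And>h y. J h y < \<infinity>" and "J_star 0 x < \<infinity>"
  shows "enn2real (J_star 0 x) - enn2real (J 0 x)
    \<le> (\<integral>w. (\<Sum>l<H. (if l < (LEAST k. J_star k (w k) \<le> J k (w k)) then 1 else 0) *
          ((\<integral>x'. enn2real (J_min (Suc l) x') \<partial>trans W_star \<phi> \<sigma> (w l) (\<pi> (w l) l))
           - (\<integral>x'. enn2real (J_min (Suc l) x') \<partial>trans W \<phi> \<sigma> (w l) (\<pi> (w l) l))))
        \<partial>true_traj H 0 x)"
proof -
  define stopped where "stopped V l w = (if alive 0 l w then next_value V l (w l) else 0)" for V l w
  have sum_stopped: "stopped_sum (next_value V) 0 w = (\<Sum>l<H. stopped V l w)" for V w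
    by (simp add: stopped_sum_def stopped_def atLeast0LessThan)
  have [measurable]: "stopped V l \<in> borel_measurable (true_traj H 0 x)" if "bounded_linear V" for V l
    unfolding stopped_def alive_def measurable_traj_iff[OF bounded_linear_W_star]
    using that bounded_linear_W bounded_linear_W_star by measurable
  have "(\<Sum>l<H. (if l < (LEAST k. J_star k (w k) \<le> J k (w k)) then 1 else 0) *
          ((\<integral>x'. enn2real (J_min (Suc l) x') \<partial>trans W_star \<phi> \<sigma> (w l) (\<pi> (w l) l))
           - (\<integral>x'. enn2real (J_min (Suc l) x') \<partial>trans W \<phi> \<sigma> (w l) (\<pi> (w l) l))))
      = (\<Sum>l<H. enn2real (stopped W_star l w)) - (\<Sum>l<H. enn2real (stopped W l w))" for w
    unfolding sum_subtractf[symmetric]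
    by (intro sum.cong) (simp_all add: less_stop_time_iff_alive stopped_def
        integral_J_min_eq_next_value[OF J_finite bounded_linear_W]
        integral_J_min_eq_next_value[OF J_finite bounded_linear_W_star])
  moreover note cost_gap_le_stopped_sums[OF J_finite assms(2), unfolded sum_stopped]
  ultimately show ?thesis
    using bounded_linear_W bounded_linear_W_star
    by (simp add: Bochner_Integration.integral_diff integrable_sum_enn2real integral_sum_enn2real)
qed

end

theorem mainTheorem4:
  fixes \<phi> :: "real^'d \<Rightarrow> 'u \<Rightarrow> 'h::{real_inner,complete_space}"
    and W Wstar :: "'h \<Rightarrow> real^'d" and \<sigma> :: real and H :: nat
    and \<pi> :: "real^'d \<Rightarrow> nat \<Rightarrow> 'u" and c :: "real^'d \<Rightarrow> 'u \<Rightarrow> real" and x0 :: "real^'d"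
  assumes "\<sigma> > 0" and "bounded_linear W" and "bounded_linear Wstar"
    and "\<forall>x u. 0 \<le> c x u"
    and "\<forall>h. (\<lambda>x. c x (\<pi> x h)) \<in> borel_measurable borel"
    and "\<forall>h. (\<lambda>x. \<phi> x (\<pi> x h)) \<in> borel_measurable borel"
    and "\<forall>h x. ctg W \<phi> \<sigma> \<pi> H c h x < \<infinity>"
    and "(\<integral>\<^sup>+ \<omega>. ennreal ((\<Sum>h<H. c (\<omega> h) (\<pi> (\<omega> h) h))^2) \<partial>traj Wstar \<phi> \<sigma> \<pi> H 0 x0) < \<infinity>"
  shows
    "let J = ctg W \<phi> \<sigma> \<pi> H c;
         Js = ctg Wstar \<phi> \<sigma> \<pi> H c;
         \<tau> = (\<lambda>\<omega>::nat \<Rightarrow> real^'d. LEAST h. J h (\<omega> h) \<ge> Js h (\<omega> h));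
         Jt = (\<lambda>h x. enn2real (min (J h x) (Js h x)))
     in enn2real (Js 0 x0) - enn2real (J 0 x0)
        \<le> (\<integral>\<omega>. (\<Sum>h<H. (if h < \<tau> \<omega> then 1 else 0) *
               ((\<integral>x'. Jt (Suc h) x' \<partial>trans Wstar \<phi> \<sigma> (\<omega> h) (\<pi> (\<omega> h) h))
                - (\<integral>x'. Jt (Suc h) x' \<partial>trans W \<phi> \<sigma> (\<omega> h) (\<pi> (\<omega> h) h))))
           \<partial>traj Wstar \<phi> \<sigma> \<pi> H 0 x0)"
proof -
  interpret model_mismatch \<phi> \<sigma> \<pi> c H W Wstar
    by (intro model_mismatch.intro closed_loop_cost.intro gaussian_closed_loop.intro
        closed_loop_cost_axioms.intro model_mismatch_axioms.intro)
      (simp_all add: assms(1-3) assms(4-6)[rule_format])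
  have "(\<lambda>\<omega>. \<Sum>h<H. c (\<omega> h) (\<pi> (\<omega> h) h)) \<in> borel_measurable (traj Wstar \<phi> \<sigma> \<pi> H 0 x0)"
    unfolding measurable_traj_iff[OF bounded_linear_W_star] by measurable
  then have "J_star 0 x0 < \<infinity>"
    using prob_space.nn_integral_less_top_if_square[OF prob_space_traj[OF bounded_linear_W_star]]
      assms(8)
    by (simp add: ctg_def atLeast0LessThan)
  then show ?thesis
    unfolding Let_def by (rule cost_gap_le[OF assms(7)[rule_format]])
qed

end
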